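(* Let $A$ be a finite set of alternatives, let ${\mathcal D}\subseteq {\mathcal L}(A)$ be a Condorcet domain, and let $a,b,c\in A$ be distinct. Suppose ${\mathcal D}$ contains a linear order $w=\ldots bc\ldots a\ldots$ in which $b$ immediately precedes $c$ and $a$ is ranked below $c$. Then $a$ is a right obstruction to the swap $bc\to cb$ if and only if ${\mathcal D}|_{\{a,b,c\}}$ satisfies $cN_{\{a,b,c\}}1$ or $bN_{\{a,b,c\}}2$ (or both), and satisfies no other never condition.
   Context: ${\mathcal L}(A)$ denotes the set of all linear orders on $A$; a linear order is written as a word listing alternatives from most preferred to least preferred. For ${\mathcal D}\subseteq{\mathcal L}(A)$ and $T\subseteq A$, the restriction ${\mathcal D}|_T$ is the set of restrictions to $T$ of the orders in ${\mathcal D}$. For a triple $T$, $x\in T$ and $i\in\{1,2,3\}$, the never condition $xN_T i$ says that in every order of ${\mathcal D}|_T$ the alternative $x$ is not in position $i$ (position 1 = top, 3 = bottom). A domain ${\mathcal D}$ is a Condorcet domain if for every triple $T\subseteq A$ the restriction ${\mathcal D}|_T$ satisfies at least one never condition (equivalently, every profile of orders from ${\mathcal D}$ with an odd number of voters has a transitive majority relation); a set of orders on a triple is Condorcet if it satisfies at least one never condition. Right obstruction: in an order $w=\ldots bc\ldots a\ldots\in{\mathcal D}$ (with $b$ immediately followed by $c$, and $a$ ranked below them), the alternative $a$ is a right obstruction to the swap $bc\to cb$ if ${\mathcal D}|_{\{a,b,c\}}\cup\{cba\}$ is not Condorcet. *)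

theory Defs
  imports Main
begin

text \<open>A linear order on A is represented as a list listing the alternatives
  from most preferred (head) to least preferred; it contains each element of A exactly once.\<close>
definition linorder_on :: "'a set \<Rightarrow> 'a list \<Rightarrow> bool" where
  "linorder_on A w \<longleftrightarrow> distinct w \<and> set w = A"

definition lin_orders :: "'a set \<Rightarrow> 'a list set" where
  "lin_orders A = {w. linorder_on A w}"

definition restr :: "'a set \<Rightarrow> 'a list \<Rightarrow> 'a list" where
  "restr T w = filter (\<lambda>x. x \<in> T) w"

definition restr_dom :: "'a list set \<Rightarrow> 'a set \<Rightarrow> 'a list set" where
  "restr_dom D T = restr T ` D"

text \<open>Position of x in w, 1-based (1 = top).\<close>
definition pos :: "'a list \<Rightarrow> 'a \<Rightarrow> nat" where
  "pos w x = Suc (LEAST k. k < length w \<and> w ! k = x)"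

definition never :: "'a list set \<Rightarrow> 'a \<Rightarrow> nat \<Rightarrow> bool" where
  "never S x i \<longleftrightarrow> (\<forall>w\<in>S. pos w x \<noteq> i)"

definition is_triple :: "'a set \<Rightarrow> bool" where
  "is_triple T \<longleftrightarrow> card T = 3"

definition condorcet_on_triple :: "'a set \<Rightarrow> 'a list set \<Rightarrow> bool" where
  "condorcet_on_triple T S \<longleftrightarrow> (\<exists>x\<in>T. \<exists>i\<in>{1,2,3}. never S x i)"

definition condorcet_domain :: "'a set \<Rightarrow> 'a list set \<Rightarrow> bool" where
  "condorcet_domain A D \<longleftrightarrow> D \<subseteq> lin_orders A \<and>
     (\<forall>T. T \<subseteq> A \<longrightarrow> is_triple T \<longrightarrow> condorcet_on_triple T (restr_dom D T))"

text \<open>Right obstruction: a is a right obstruction to the swap bc -> cb (in the presence of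
  an order w = ...bc...a... in D) if D|{a,b,c} together with cba is not Condorcet.\<close>
definition right_obstruction :: "'a list set \<Rightarrow> 'a \<Rightarrow> 'a \<Rightarrow> 'a \<Rightarrow> bool" where
  "right_obstruction D a b c \<longleftrightarrow>
     \<not> condorcet_on_triple {a,b,c} (restr_dom D {a,b,c} \<union> {[c,b,a]})"

end

theory Submission
  imports Defs
begin

text \<open>Restricted to the triple, w becomes bca, so a N 3 fails for the domain. Adding cba
  kills exactly the never conditions x N i with x in position i of cba, namely c N 1, b N 2 and
  a N 3. Hence the enlarged set is not Condorcet iff every never condition of the domain on the
  triple is c N 1 or b N 2, and since the domain is Condorcet at least one of them holds.\<close>

lemma pos_nth:
  assumes "distinct w" "k < length w"
  shows "pos w (w ! k) = Suc k"
proof -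
  have "(LEAST j. j < length w \<and> w ! j = w ! k) = k"
    by (rule Least_equality) (use assms nth_eq_iff_index_eq in \<open>auto simp: not_le\<close>)
  then show ?thesis unfolding pos_def by simp
qed

lemma pos_triple:
  assumes "distinct [x, y, z]"
  shows "pos [x, y, z] x = 1" "pos [x, y, z] y = 2" "pos [x, y, z] z = 3"
  using pos_nth[OF assms, of 0] pos_nth[OF assms, of 1] pos_nth[OF assms, of 2]
  by (simp_all add: numeral_eq_Suc)

lemma restr_adjacent_pair:
  assumes "distinct (u @ [b, c] @ v)" "a \<in> set v"
  shows "restr {a, b, c} (u @ [b, c] @ v) = [b, c, a]"
proof -
  obtain v1 v2 where v: "v = v1 @ a # v2"
    using split_list[OF assms(2)] by blast
  have "restr {a, b, c} xs = []" if "xs \<in> {u, v1, v2}" for xs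
    using that assms(1) v unfolding restr_def by (auto simp: filter_empty_conv)
  with assms(1) v show ?thesis
    unfolding restr_def by auto
qed

lemma never_Un_singleton_iff:
  "never (S \<union> {v}) x i \<longleftrightarrow> never S x i \<and> pos v x \<noteq> i"
  unfolding never_def by auto

lemma not_condorcet_Un_singleton_iff:
  "\<not> condorcet_on_triple T (S \<union> {v}) \<longleftrightarrow>
     (\<forall>x\<in>T. \<forall>i\<in>{1, 2, 3}. never S x i \<longrightarrow> pos v x = i)"
  unfolding condorcet_on_triple_def never_Un_singleton_iff by blast

lemma condorcet_domain_restr_triple:
  assumes "condorcet_domain A D" "a \<in> A" "b \<in> A" "c \<in> A"
    and "a \<noteq> b" "b \<noteq> c" "a \<noteq> c"
  shows "condorcet_on_triple {a, b, c} (restr_dom D {a, b, c})"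
proof -
  have "{a, b, c} \<subseteq> A" "is_triple {a, b, c}"
    using assms(2-7) unfolding is_triple_def by auto
  with assms(1) show ?thesis
    unfolding condorcet_domain_def by blast
qed

lemma restr_dom_contains_bca:
  assumes "D \<subseteq> lin_orders A" "w \<in> D" "w = u @ [b, c] @ v" "a \<in> set v"
  shows "[b, c, a] \<in> restr_dom D {a, b, c}"
proof -
  have "distinct w"
    using assms(1,2) unfolding lin_orders_def linorder_on_def by auto
  then have "restr {a, b, c} w = [b, c, a]"
    using assms(3,4) restr_adjacent_pair by simp
  with assms(2) show ?thesis
    unfolding restr_dom_def by force
qed

lemma never_conditions_below_cba_iff:
  assumes "distinct [a, b, c]"
    and "condorcet_on_triple {a, b, c} S"
    and "\<not> never S a 3"
  shows "(\<forall>x\<in>{a, b, c}. \<forall>i\<in>{1, 2, 3}. never S x i \<longrightarrow> pos [c, b, a] x = i) \<longleftrightarrow>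
           ((never S c 1 \<or> never S b 2) \<and>
            (\<forall>x\<in>{a, b, c}. \<forall>i\<in>{1, 2, 3::nat}.
               never S x i \<longrightarrow> (x = c \<and> i = 1) \<or> (x = b \<and> i = 2)))"
    (is "?below_cba \<longleftrightarrow> ?c1_or_b2 \<and> ?only_c1_b2")
proof -
  have "distinct [c, b, a]" using assms(1) by auto
  note pos_cba = pos_triple[OF this]
  have below_cba_iff: "pos [c, b, a] x = i \<longleftrightarrow> (x = c \<and> i = 1) \<or> (x = b \<and> i = 2)"
    if "x \<in> {a, b, c}" "never S x i" for x i
  proof -
    from that(1) consider "x = a" | "x = b" | "x = c" by blast
    then show ?thesis
      by cases (use that(2) assms(1,3) pos_cba in auto)
  qed
  then have "?below_cba \<longleftrightarrow> ?only_c1_b2"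
    by meson
  moreover have "?c1_or_b2" if ?only_c1_b2
  proof -
    obtain x i where "x \<in> {a, b, c}" "i \<in> {1, 2, 3::nat}" "never S x i"
      using assms(2) unfolding condorcet_on_triple_def by blast
    moreover from this that have "(x = c \<and> i = 1) \<or> (x = b \<and> i = 2)"
      by meson
    ultimately show ?thesis
      by blast
  qed
  ultimately show ?thesis
    by blast
qed

theorem proposition1:
  fixes A :: "'a set" and D :: "'a list set" and a b c :: 'a and w :: "'a list"
  assumes "finite A"
    and "condorcet_domain A D"
    and "a \<in> A" "b \<in> A" "c \<in> A"
    and "a \<noteq> b" "b \<noteq> c" "a \<noteq> c"
    and "w \<in> D"
    and "\<exists>u v. w = u @ [b, c] @ v \<and> a \<in> set v"
  shows "right_obstruction D a b c \<longleftrightarrow>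
           ((never (restr_dom D {a,b,c}) c 1 \<or> never (restr_dom D {a,b,c}) b 2) \<and>
            (\<forall>x\<in>{a,b,c}. \<forall>i\<in>{1,2,3::nat}.
               never (restr_dom D {a,b,c}) x i \<longrightarrow> (x = c \<and> i = 1) \<or> (x = b \<and> i = 2)))"
proof -
  let ?S = "restr_dom D {a, b, c}"
  have "distinct [a, b, c]"
    using assms(6-8) by simp
  moreover have "condorcet_on_triple {a, b, c} ?S"
    by (rule condorcet_domain_restr_triple[OF assms(2-8)])
  moreover have "\<not> never ?S a 3"
  proof -
    have "D \<subseteq> lin_orders A"
      using assms(2) unfolding condorcet_domain_def by simp
    moreover obtain u v where "w = u @ [b, c] @ v" "a \<in> set v"
      using assms(10) by blast
    ultimately have "[b, c, a] \<in> ?S"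
      by (intro restr_dom_contains_bca[of D A w u b c v a] assms(9))
    moreover have "pos [b, c, a] a = 3"
      using pos_triple(3)[of b c a] assms(6-8) by simp
    ultimately show ?thesis
      unfolding never_def by blast
  qed
  ultimately show ?thesis
    unfolding right_obstruction_def not_condorcet_Un_singleton_iff
    by (rule never_conditions_below_cba_iff)
qed

end
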